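(* Let $n\ge 1$, let $C$ be a real $m\times n$ matrix, and let $\Delta=\{\vec u\in\{-1,0,1\}^n : C\vec u=\vec 0\}$. For $\vec u\in\Delta$ define the $n$-qubit operator $$H_c(\vec u)=\sigma_1^{u_1}\sigma_2^{u_2}\cdots\sigma_n^{u_n}+\sigma_1^{-u_1}\sigma_2^{-u_2}\cdots\sigma_n^{-u_n},$$ and let $H^d=\sum_{\vec u\in\Delta}H_c(\vec u)$. Let $(c_1,\dots,c_n)$ be any row of $C$ and let $\hat C=\sum_{i=1}^n c_i\sigma^z_i$ be the corresponding constraint operator. Let $\beta\in\mathbb{R}$, let $|x\rangle$ be any $n$-qubit state, and let $\hat B=\prod_{\vec u\in\Delta}e^{-i\beta H_c(\vec u)}$ (the product of these unitaries taken in any fixed order). Set $|x_c\rangle=e^{-i\beta H^d}|x\rangle$ and $|x_s\rangle=\hat B|x\rangle$. Then $$\langle x_s|\hat C|x_s\rangle=\langle x_c|\hat C|x_c\rangle .$$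
   Context: Qubits are labelled $1,\dots,n$. For a single-qubit operator $A$, $A_i$ (or $A$ with subscript $i$) denotes $A$ acting on qubit $i$ tensored with the identity on all other qubits; products such as $\sigma_1^{u_1}\cdots\sigma_n^{u_n}$ are thus tensor products. The single-qubit matrices are $\sigma^{+1}=\begin{pmatrix}0&0\\1&0\end{pmatrix}$, $\sigma^{0}=\begin{pmatrix}1&0\\0&1\end{pmatrix}$, $\sigma^{-1}=\begin{pmatrix}0&1\\0&0\end{pmatrix}$ (in the computational basis $|0\rangle,|1\rangle$), and $\sigma^z=\begin{pmatrix}1&0\\0&-1\end{pmatrix}$ is the Pauli $Z$ matrix. The operator $\hat C$ encodes the linear constraint $\sum_i c_i x_i=c$ on binary variables, with $x_i$ corresponding to $(I-\sigma^z_i)/2$. *)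

theory Defs
  imports "Jordan_Normal_Form.Matrix"
begin

text \<open>n-qubit operators are complex 2^n x 2^n matrices; basis index a < 2^n,
  qubit i (0-based, i.e. qubit i+1 of the paper) is bit i of a (bit = 1 means basis state |1>).\<close>

definition sigma :: "int \<Rightarrow> bool \<Rightarrow> bool \<Rightarrow> complex" where
  "sigma u r s = (if u = 1 then (if r \<and> \<not> s then 1 else 0)
                 else if u = -1 then (if \<not> r \<and> s then 1 else 0)
                 else if u = 0 then (if r = s then 1 else 0) else 0)"

definition sigma_z :: "bool \<Rightarrow> bool \<Rightarrow> complex" where
  "sigma_z r s = (if r = s then (if r then -1 else 1) else 0)"

definition sigma_prod :: "nat \<Rightarrow> (nat \<Rightarrow> int) \<Rightarrow> complex mat" where
  "sigma_prod n u = mat (2^n) (2^n) (\<lambda>(a,b). \<Prod>i<n. sigma (u i) (bit a i) (bit b i))"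

definition op_on :: "nat \<Rightarrow> nat \<Rightarrow> (bool \<Rightarrow> bool \<Rightarrow> complex) \<Rightarrow> complex mat" where
  "op_on n i A = mat (2^n) (2^n)
     (\<lambda>(a,b). \<Prod>j<n. (if j = i then A (bit a j) (bit b j) else (if bit a j = bit b j then 1 else 0)))"

definition H_c :: "nat \<Rightarrow> (nat \<Rightarrow> int) \<Rightarrow> complex mat" where
  "H_c n u = sigma_prod n u + sigma_prod n (\<lambda>i. - u i)"

definition Delta :: "nat \<Rightarrow> real mat \<Rightarrow> (nat \<Rightarrow> int) set" where
  "Delta n C = {u. (\<forall>i<n. u i \<in> {-1,0,1}) \<and> (\<forall>i\<ge>n. u i = 0)
                  \<and> (\<forall>r<dim_row C. (\<Sum>i<n. C $$ (r,i) * of_int (u i)) = 0)}"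

definition H_d :: "nat \<Rightarrow> real mat \<Rightarrow> complex mat" where
  "H_d n C = mat (2^n) (2^n) (\<lambda>(a,b). \<Sum>u\<in>Delta n C. H_c n u $$ (a,b))"

definition C_hat :: "nat \<Rightarrow> (nat \<Rightarrow> real) \<Rightarrow> complex mat" where
  "C_hat n c = mat (2^n) (2^n) (\<lambda>(a,b). \<Sum>i<n. complex_of_real (c i) * op_on n i sigma_z $$ (a,b))"

definition mat_exp :: "complex mat \<Rightarrow> complex mat" where
  "mat_exp A = mat (dim_row A) (dim_row A) (\<lambda>(i,j). \<Sum>k. (A ^\<^sub>m k) $$ (i,j) / of_nat (fact k))"

definition B_hat :: "nat \<Rightarrow> real \<Rightarrow> (nat \<Rightarrow> int) list \<Rightarrow> complex mat" where
  "B_hat n \<beta> us = foldr (\<lambda>u M. mat_exp ((- \<i> * complex_of_real \<beta>) \<cdot>\<^sub>m H_c n u) * M) us (1\<^sub>m (2^n))"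

definition expval :: "complex mat \<Rightarrow> complex vec \<Rightarrow> complex" where
  "expval M v = (\<Sum>i<dim_vec v. cnj (v $ i) * (M *\<^sub>v v) $ i)"

end

theory Submission
  imports Defs
begin

text \<open>The constraint operator is diagonal in the computational basis: on the basis state a it
  has the eigenvalue \<lambda>(a) = \<Sum> c_i (-1)^(a_i). A non-zero entry of the tensor product of the
  \<sigma>^(u_i) in row a and column b changes each sign (-1)^(a_i) by -2 u_i, so
  \<lambda>(a) - \<lambda>(b) = -2 \<Sum> c_i u_i = 0 whenever C u = 0.
  Hence H_c(u), H^d and all their exponentials only connect basis states of equal eigenvalue,
  i.e. they commute with the constraint operator. The exponential of -i\<beta>H for Hermitian H is
  unitary, and a unitary commuting with a diagonal operator leaves its expectation value unchanged.
  So both sides equal the expectation value in |x\<rangle>, for every vector x and every order of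
  the product.\<close>

lemma mat_mult_entry_sum:
  assumes "A \<in> carrier_mat N K" "B \<in> carrier_mat K M" "i < N" "j < M"
  shows "(A * B) $$ (i,j) = (\<Sum>l<K. A $$ (i,l) * B $$ (l,j))"
  using assms by (auto simp: scalar_prod_def lessThan_atLeast0 intro!: sum.cong)

lemma mat_mult_vec_entry_sum:
  assumes "M \<in> carrier_mat N K" "v \<in> carrier_vec K" "a < N"
  shows "(M *\<^sub>v v) $ a = (\<Sum>b<K. M $$ (a,b) * v $ b)"
  using assms by (auto simp: scalar_prod_def lessThan_atLeast0 intro!: sum.cong)

lemma pow_mat_add:
  assumes "(A :: 'a::semiring_1 mat) \<in> carrier_mat N N"
  shows "A ^\<^sub>m p * A ^\<^sub>m q = A ^\<^sub>m (p + q)"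
proof (induction q)
  case 0
  then show ?case using assms by simp
next
  case (Suc q)
  have "A ^\<^sub>m p * A ^\<^sub>m Suc q = (A ^\<^sub>m p * A ^\<^sub>m q) * A"
    using assms by (simp add: assoc_mult_mat[symmetric, of _ N N _ N _ N])
  then show ?case using Suc by simp
qed

lemma pow_mat_entry_norm_le:
  fixes A :: "'a::real_normed_algebra_1 mat"
  assumes A: "A \<in> carrier_mat N N"
  shows "i < N \<Longrightarrow> j < N \<Longrightarrow> norm ((A ^\<^sub>m k) $$ (i,j)) \<le> (\<Sum>a<N. \<Sum>b<N. norm (A $$ (a,b))) ^ k"
proof (induction k arbitrary: i j)
  case 0
  then show ?case using A by auto
next
  case (Suc k)
  define m where "m = (\<Sum>a<N. \<Sum>b<N. norm (A $$ (a,b)))"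
  have m_nonneg: "0 \<le> m" unfolding m_def by (intro sum_nonneg) auto
  have column_le: "(\<Sum>l<N. norm (A $$ (l,j))) \<le> m"
    unfolding m_def using Suc.prems by (intro sum_mono member_le_sum) auto
  have "norm ((A ^\<^sub>m Suc k) $$ (i,j)) = norm (\<Sum>l<N. (A ^\<^sub>m k) $$ (i,l) * A $$ (l,j))"
    using mat_mult_entry_sum[of "A ^\<^sub>m k" N N A N i j] A Suc.prems by simp
  also have "\<dots> \<le> (\<Sum>l<N. norm ((A ^\<^sub>m k) $$ (i,l)) * norm (A $$ (l,j)))"
    by (intro order_trans[OF norm_sum] sum_mono norm_mult_ineq)
  also have "\<dots> \<le> (\<Sum>l<N. m ^ k * norm (A $$ (l,j)))"
    using Suc unfolding m_def by (intro sum_mono mult_right_mono) auto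
  also have "\<dots> = m ^ k * (\<Sum>l<N. norm (A $$ (l,j)))" by (simp add: sum_distrib_left)
  also have "\<dots> \<le> m ^ k * m"
    using column_le m_nonneg by (intro mult_left_mono) auto
  finally show ?case by (simp add: m_def mult.commute)
qed

lemma mat_exp_carrier: "A \<in> carrier_mat N N \<Longrightarrow> mat_exp A \<in> carrier_mat N N"
  unfolding mat_exp_def by simp

lemma mat_exp_entry:
  assumes "A \<in> carrier_mat N N" "i < N" "j < N"
  shows "mat_exp A $$ (i,j) = (\<Sum>k. (A ^\<^sub>m k) $$ (i,j) / of_nat (fact k))"
  using assms unfolding mat_exp_def by simp

lemma summable_norm_mat_exp_series:
  fixes A :: "complex mat"
  assumes A: "A \<in> carrier_mat N N" and ij: "i < N" "j < N"
  shows "summable (\<lambda>k. norm ((A ^\<^sub>m k) $$ (i,j) / of_nat (fact k)))"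
proof (rule summable_comparison_test[OF _ summable_exp])
  show "\<exists>K. \<forall>k\<ge>K. norm (norm ((A ^\<^sub>m k) $$ (i,j) / of_nat (fact k)))
      \<le> inverse (fact k) * (\<Sum>a<N. \<Sum>b<N. norm (A $$ (a,b))) ^ k"
    using pow_mat_entry_norm_le[OF A ij] by (auto simp: norm_divide divide_simps mult.commute)
qed

lemma mat_exp_series_sums:
  fixes A :: "complex mat"
  assumes "A \<in> carrier_mat N N" "i < N" "j < N"
  shows "(\<lambda>k. (A ^\<^sub>m k) $$ (i,j) / of_nat (fact k)) sums (mat_exp A $$ (i,j))"
  using summable_norm_cancel[OF summable_norm_mat_exp_series[OF assms]] mat_exp_entry[OF assms]
  by (simp add: summable_sums)

definition unitary_mat :: "nat \<Rightarrow> complex mat \<Rightarrow> bool" where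
  "unitary_mat N M \<longleftrightarrow> M \<in> carrier_mat N N \<and>
     (\<forall>i<N. \<forall>j<N. (\<Sum>l<N. cnj (M $$ (l,i)) * M $$ (l,j)) = (if i = j then 1 else 0))"

definition hermitian_mat :: "nat \<Rightarrow> complex mat \<Rightarrow> bool" where
  "hermitian_mat N H \<longleftrightarrow> H \<in> carrier_mat N N \<and> (\<forall>a<N. \<forall>b<N. cnj (H $$ (b,a)) = H $$ (a,b))"

lemma cnj_pow_mat_skew:
  fixes A :: "complex mat"
  assumes A: "A \<in> carrier_mat N N"
    and skew: "\<And>a b. a < N \<Longrightarrow> b < N \<Longrightarrow> cnj (A $$ (b,a)) = - A $$ (a,b)"
  shows "i < N \<Longrightarrow> l < N \<Longrightarrow> cnj ((A ^\<^sub>m k) $$ (l,i)) = (-1)^k * (A ^\<^sub>m k) $$ (i,l)"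
proof (induction k arbitrary: i l)
  case 0
  then show ?case using A by auto
next
  case (Suc k)
  have "cnj ((A ^\<^sub>m Suc k) $$ (l,i)) = cnj (\<Sum>m<N. (A ^\<^sub>m k) $$ (l,m) * A $$ (m,i))"
    using mat_mult_entry_sum[of "A ^\<^sub>m k" N N A N l i] A Suc.prems by simp
  also have "\<dots> = (\<Sum>m<N. (-1)^k * (A ^\<^sub>m k) $$ (m,l) * (- A $$ (i,m)))"
    using Suc skew by (auto intro!: sum.cong)
  also have "\<dots> = (-1)^Suc k * (\<Sum>m<N. A $$ (i,m) * (A ^\<^sub>m k) $$ (m,l))"
    by (simp add: sum_distrib_left algebra_simps)
  also have "(\<Sum>m<N. A $$ (i,m) * (A ^\<^sub>m k) $$ (m,l)) = (A ^\<^sub>m 1 * A ^\<^sub>m k) $$ (i,l)"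
    using mat_mult_entry_sum[of A N N "A ^\<^sub>m k" N i l] A Suc.prems by simp
  also have "A ^\<^sub>m 1 * A ^\<^sub>m k = A ^\<^sub>m Suc k"
    using pow_mat_add[OF A, of 1 k] by simp
  finally show ?case .
qed

text \<open>The k-th coefficient of the Cauchy product of the series of exp(-A) and exp(A) is
  A^k/k! \<Sum>_p (-1)^p (k choose p), which vanishes for k > 0.\<close>

lemma exp_neg_exp_cauchy_coeff:
  fixes A :: "complex mat"
  assumes A: "A \<in> carrier_mat N N" and ij: "i < N" "j < N"
  shows "(\<Sum>l<N. \<Sum>p\<le>k. ((-1)^p * (A ^\<^sub>m p) $$ (i,l) / of_nat (fact p)) *
             ((A ^\<^sub>m (k - p)) $$ (l,j) / of_nat (fact (k - p))))
         = (if k = 0 then (if i = j then 1 else 0) else 0)"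
proof -
  have "(\<Sum>l<N. \<Sum>p\<le>k. ((-1)^p * (A ^\<^sub>m p) $$ (i,l) / of_nat (fact p)) *
             ((A ^\<^sub>m (k - p)) $$ (l,j) / of_nat (fact (k - p))))
      = (\<Sum>p\<le>k. ((-1)^p / (of_nat (fact p) * of_nat (fact (k-p)))) *
           (\<Sum>l<N. (A ^\<^sub>m p) $$ (i,l) * (A ^\<^sub>m (k - p)) $$ (l,j)))"
    by (subst sum.swap) (auto simp: sum_distrib_left intro!: sum.cong)
  also have "\<dots> = (\<Sum>p\<le>k. ((-1)^p / (of_nat (fact p) * of_nat (fact (k-p)))) * (A ^\<^sub>m k) $$ (i,j))"
  proof (intro sum.cong refl)
    fix p assume "p \<in> {..k}"
    then have "A ^\<^sub>m p * A ^\<^sub>m (k - p) = A ^\<^sub>m k" using pow_mat_add[OF A, of p "k - p"] by simp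
    then show "((-1)^p / (of_nat (fact p) * of_nat (fact (k-p)))) *
        (\<Sum>l<N. (A ^\<^sub>m p) $$ (i,l) * (A ^\<^sub>m (k - p)) $$ (l,j))
      = ((-1)^p / (of_nat (fact p) * of_nat (fact (k-p)))) * (A ^\<^sub>m k) $$ (i,j)"
      using mat_mult_entry_sum[of "A ^\<^sub>m p" N N "A ^\<^sub>m (k - p)" N i j] A ij by simp
  qed
  also have "\<dots> = (A ^\<^sub>m k) $$ (i,j) / of_nat (fact k) * (\<Sum>p\<le>k. (-1)^p * of_nat (k choose p))"
  proof -
    have "(-1)^p / (of_nat (fact p) * of_nat (fact (k-p))) = (-1)^p * of_nat (k choose p) / (of_nat (fact k) :: complex)"
      if "p \<le> k" for p
      using binomial_fact[OF that, where 'a=complex] by (simp add: field_simps)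
    then show ?thesis by (auto simp: sum_distrib_left intro!: sum.cong)
  qed
  also have "\<dots> = (if k = 0 then (if i = j then 1 else 0) else 0)"
    using choose_alternating_sum[of k, where 'a=complex] A ij by auto
  finally show ?thesis .
qed

lemma unitary_mat_exp_skew:
  fixes A :: "complex mat"
  assumes A: "A \<in> carrier_mat N N"
    and skew: "\<And>a b. a < N \<Longrightarrow> b < N \<Longrightarrow> cnj (A $$ (b,a)) = - A $$ (a,b)"
  shows "unitary_mat N (mat_exp A)"
  unfolding unitary_mat_def
proof (intro conjI allI impI mat_exp_carrier[OF A])
  fix i j assume ij: "i < N" "j < N"
  define a where "a l k = (-1)^k * (A ^\<^sub>m k) $$ (i,l) / of_nat (fact k)" for l k
  define b where "b l k = (A ^\<^sub>m k) $$ (l,j) / of_nat (fact k)" for l k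
  have product_sums: "(\<lambda>k. \<Sum>p\<le>k. a l p * b l (k - p)) sums (cnj (mat_exp A $$ (l,i)) * mat_exp A $$ (l,j))"
    if l: "l < N" for l
  proof -
    have "(\<lambda>k. cnj ((A ^\<^sub>m k) $$ (l,i) / of_nat (fact k))) sums cnj (mat_exp A $$ (l,i))"
      by (subst sums_cnj) (rule mat_exp_series_sums[OF A l ij(1)])
    moreover have "cnj ((A ^\<^sub>m k) $$ (l,i) / of_nat (fact k)) = a l k" for k
      using cnj_pow_mat_skew[OF A skew ij(1) l, of k] by (simp add: a_def)
    ultimately have sums_a: "a l sums cnj (mat_exp A $$ (l,i))" by simp
    have sums_b: "b l sums mat_exp A $$ (l,j)"
      using mat_exp_series_sums[OF A l ij(2)] by (simp add: b_def[abs_def])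
    have "summable (\<lambda>k. norm (a l k))"
      using summable_norm_mat_exp_series[OF A ij(1) l] by (simp add: a_def norm_mult norm_divide norm_power)
    moreover have "summable (\<lambda>k. norm (b l k))"
      using summable_norm_mat_exp_series[OF A l ij(2)] by (simp add: b_def)
    ultimately show ?thesis
      using Cauchy_product_sums sums_unique[OF sums_a] sums_unique[OF sums_b] by metis
  qed
  have "(\<lambda>k. \<Sum>l<N. \<Sum>p\<le>k. a l p * b l (k - p)) sums (\<Sum>l<N. cnj (mat_exp A $$ (l,i)) * mat_exp A $$ (l,j))"
    by (rule sums_sum) (use product_sums in auto)
  moreover have "(\<Sum>l<N. \<Sum>p\<le>k. a l p * b l (k - p)) = (if k = 0 then (if i = j then 1 else 0) else 0)" for k
    using exp_neg_exp_cauchy_coeff[OF A ij, of k] by (simp add: a_def b_def)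
  ultimately have "(\<lambda>k. if k = 0 then (if i = j then 1 else 0) else 0)
      sums (\<Sum>l<N. cnj (mat_exp A $$ (l,i)) * mat_exp A $$ (l,j))"
    by simp
  moreover have "(\<lambda>k. if k = 0 then (if i = j then 1 else 0) else 0) sums ((if i = j then 1 else 0) :: complex)"
    using sums_single[of 0 "\<lambda>_. (if i = j then 1 else 0) :: complex"] by simp
  ultimately show "(\<Sum>l<N. cnj (mat_exp A $$ (l,i)) * mat_exp A $$ (l,j)) = (if i = j then 1 else 0)"
    by (rule sums_unique2)
qed

lemma unitary_mat_exp_hermitian:
  assumes "hermitian_mat N H"
  shows "unitary_mat N (mat_exp ((- \<i> * complex_of_real \<beta>) \<cdot>\<^sub>m H))"
  using assms by (intro unitary_mat_exp_skew) (auto simp: hermitian_mat_def)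

lemma unitary_mat_inner:
  assumes M: "unitary_mat N M" and v: "v \<in> carrier_vec N" and w: "w \<in> carrier_vec N"
  shows "(\<Sum>a<N. cnj ((M *\<^sub>v v) $ a) * (M *\<^sub>v w) $ a) = (\<Sum>b<N. cnj (v $ b) * w $ b)"
proof -
  have M_carrier: "M \<in> carrier_mat N N" using M by (simp add: unitary_mat_def)
  have ortho: "i < N \<Longrightarrow> j < N \<Longrightarrow> (\<Sum>l<N. cnj (M $$ (l,i)) * M $$ (l,j)) = (if i = j then 1 else 0)"
    for i j using M by (simp add: unitary_mat_def)
  have "(\<Sum>a<N. cnj ((M *\<^sub>v v) $ a) * (M *\<^sub>v w) $ a)
      = (\<Sum>a<N. (\<Sum>b<N. cnj (M $$ (a,b)) * cnj (v $ b)) * (\<Sum>d<N. M $$ (a,d) * w $ d))"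
    using mat_mult_vec_entry_sum[OF M_carrier] v w
    by (intro sum.cong refl) (simp add: cnj_sum del: index_mult_mat_vec)
  also have "\<dots> = (\<Sum>a<N. \<Sum>b<N. \<Sum>d<N. (cnj (M $$ (a,b)) * cnj (v $ b)) * (M $$ (a,d) * w $ d))"
    by (simp only: sum_product)
  also have "\<dots> = (\<Sum>b<N. \<Sum>a<N. \<Sum>d<N. (cnj (M $$ (a,b)) * cnj (v $ b)) * (M $$ (a,d) * w $ d))"
    by (rule sum.swap)
  also have "\<dots> = (\<Sum>b<N. \<Sum>d<N. \<Sum>a<N. (cnj (M $$ (a,b)) * cnj (v $ b)) * (M $$ (a,d) * w $ d))"
    by (intro sum.cong refl sum.swap)
  also have "\<dots> = (\<Sum>b<N. \<Sum>d<N. cnj (v $ b) * w $ d * (\<Sum>a<N. cnj (M $$ (a,b)) * M $$ (a,d)))"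
    by (simp add: sum_distrib_left mult_ac)
  also have "\<dots> = (\<Sum>b<N. cnj (v $ b) * w $ b)"
    by (intro sum.cong refl) (simp add: ortho if_distrib sum.delta cong: if_cong)
  finally show ?thesis .
qed

text \<open>A level-preserving M never connects basis states on which d differs; for diagonal D with
  diagonal d this says exactly that M commutes with D.\<close>

definition level_preserving :: "(nat \<Rightarrow> 'b) \<Rightarrow> nat \<Rightarrow> 'a::zero mat \<Rightarrow> bool" where
  "level_preserving d N M \<longleftrightarrow> M \<in> carrier_mat N N \<and> (\<forall>a<N. \<forall>b<N. M $$ (a,b) \<noteq> 0 \<longrightarrow> d a = d b)"

lemma level_preserving_add:
  fixes A B :: "'a::monoid_add mat"
  assumes A: "level_preserving d N A" and B: "level_preserving d N B"
  shows "level_preserving d N (A + B)"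
  unfolding level_preserving_def
proof (intro conjI allI impI)
  show "A + B \<in> carrier_mat N N" using A B by (simp add: level_preserving_def)
  fix a b assume ab: "a < N" "b < N" and "(A + B) $$ (a,b) \<noteq> 0"
  then have "A $$ (a,b) \<noteq> 0 \<or> B $$ (a,b) \<noteq> 0"
    using B by (auto simp: level_preserving_def)
  then show "d a = d b" using A B ab by (auto simp: level_preserving_def)
qed

lemma level_preserving_smult:
  fixes A :: "'a::mult_zero mat"
  assumes A: "level_preserving d N A"
  shows "level_preserving d N (k \<cdot>\<^sub>m A)"
  unfolding level_preserving_def
proof (intro conjI allI impI)
  show "k \<cdot>\<^sub>m A \<in> carrier_mat N N" using A by (simp add: level_preserving_def)
  fix a b assume ab: "a < N" "b < N" and "(k \<cdot>\<^sub>m A) $$ (a,b) \<noteq> 0"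
  then have "A $$ (a,b) \<noteq> 0"
    using A by (auto simp: level_preserving_def)
  then show "d a = d b" using A ab by (auto simp: level_preserving_def)
qed

lemma level_preserving_mult:
  fixes A B :: "'a::semiring_0 mat"
  assumes A: "level_preserving d N A" and B: "level_preserving d N B"
  shows "level_preserving d N (A * B)"
  unfolding level_preserving_def
proof (intro conjI allI impI)
  show "A * B \<in> carrier_mat N N" using A B by (auto simp: level_preserving_def)
  fix a b assume ab: "a < N" "b < N" and nonzero: "(A * B) $$ (a,b) \<noteq> 0"
  have "(A * B) $$ (a,b) = (\<Sum>l<N. A $$ (a,l) * B $$ (l,b))"
    using A B ab by (intro mat_mult_entry_sum) (auto simp: level_preserving_def)
  then obtain l where "l < N" "A $$ (a,l) \<noteq> 0" "B $$ (l,b) \<noteq> 0"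
    using nonzero by (metis (no_types, lifting) lessThan_iff mult_not_zero sum.neutral)
  then show "d a = d b" using A B ab by (auto simp: level_preserving_def)
qed

lemma level_preserving_pow:
  fixes A :: "'a::semiring_1 mat"
  assumes "level_preserving d N A"
  shows "level_preserving d N (A ^\<^sub>m k)"
proof (induction k)
  case 0
  then show ?case using assms by (auto simp: level_preserving_def split: if_split_asm)
next
  case (Suc k)
  then show ?case using level_preserving_mult[OF Suc assms] by simp
qed

lemma level_preserving_mat_exp:
  assumes A: "level_preserving d N A"
  shows "level_preserving d N (mat_exp A)"
  unfolding level_preserving_def
proof (intro conjI allI impI)
  have A_carrier: "A \<in> carrier_mat N N" using A by (simp add: level_preserving_def)
  then show "mat_exp A \<in> carrier_mat N N" by (rule mat_exp_carrier)
  fix a b assume ab: "a < N" "b < N" and "mat_exp A $$ (a,b) \<noteq> 0"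
  then obtain k where "(A ^\<^sub>m k) $$ (a,b) \<noteq> 0"
    using mat_exp_entry[OF A_carrier ab] by force
  then show "d a = d b"
    using level_preserving_pow[OF A, of k] ab by (auto simp: level_preserving_def)
qed

lemma level_preserving_mult_diag:
  fixes M :: "'a::comm_semiring_0 mat"
  assumes M: "level_preserving d N M" and v: "v \<in> carrier_vec N" and a: "a < N"
  shows "d a * (M *\<^sub>v v) $ a = (M *\<^sub>v vec N (\<lambda>b. d b * v $ b)) $ a"
proof -
  have M_carrier: "M \<in> carrier_mat N N" using M by (simp add: level_preserving_def)
  have commute: "d a * M $$ (a,b) = M $$ (a,b) * d b" if "b < N" for b
    using M a that by (cases "M $$ (a,b) = 0") (auto simp: level_preserving_def mult.commute)
  have "d a * (M *\<^sub>v v) $ a = (\<Sum>b<N. d a * M $$ (a,b) * v $ b)"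
    using mat_mult_vec_entry_sum[OF M_carrier v a] by (simp add: sum_distrib_left mult.assoc)
  also have "\<dots> = (\<Sum>b<N. M $$ (a,b) * vec N (\<lambda>b. d b * v $ b) $ b)"
    using commute by (intro sum.cong refl) (simp add: mult.assoc)
  also have "\<dots> = (M *\<^sub>v vec N (\<lambda>b. d b * v $ b)) $ a"
    using mat_mult_vec_entry_sum[OF M_carrier _ a, of "vec N (\<lambda>b. d b * v $ b)"] by simp
  finally show ?thesis .
qed

lemma expval_diag:
  assumes D: "D \<in> carrier_mat N N" "\<And>a b. a < N \<Longrightarrow> b < N \<Longrightarrow> D $$ (a,b) = (if a = b then d a else 0)"
    and v: "v \<in> carrier_vec N"
  shows "expval D v = (\<Sum>a<N. cnj (v $ a) * (d a * v $ a))"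
proof -
  have "(D *\<^sub>v v) $ a = d a * v $ a" if a: "a < N" for a
  proof -
    have "(D *\<^sub>v v) $ a = (\<Sum>b<N. D $$ (a,b) * v $ b)"
      using mat_mult_vec_entry_sum[OF D(1) v a] .
    also have "\<dots> = (\<Sum>b<N. if b = a then d a * v $ b else 0)"
      using D(2)[OF a] by (intro sum.cong refl) auto
    also have "\<dots> = d a * v $ a" using a by simp
    finally show ?thesis .
  qed
  then show ?thesis unfolding expval_def using v by simp
qed

lemma expval_diag_unitary_level_preserving:
  assumes D: "D \<in> carrier_mat N N" "\<And>a b. a < N \<Longrightarrow> b < N \<Longrightarrow> D $$ (a,b) = (if a = b then d a else 0)"
    and U: "unitary_mat N M" and M: "level_preserving d N M" and v: "v \<in> carrier_vec N"
  shows "expval D (M *\<^sub>v v) = expval D v"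
proof -
  define w where "w = vec N (\<lambda>b. d b * v $ b)"
  have Mv: "M *\<^sub>v v \<in> carrier_vec N" using M v by (auto simp: level_preserving_def)
  have "expval D (M *\<^sub>v v) = (\<Sum>a<N. cnj ((M *\<^sub>v v) $ a) * (M *\<^sub>v w) $ a)"
    using expval_diag[OF D Mv] level_preserving_mult_diag[OF M v] by (simp add: w_def)
  also have "\<dots> = (\<Sum>b<N. cnj (v $ b) * w $ b)"
    using unitary_mat_inner[OF U v] by (simp add: w_def)
  also have "\<dots> = expval D v"
    using expval_diag[OF D v] by (simp add: w_def)
  finally show ?thesis .
qed

definition preserves_expval :: "complex mat \<Rightarrow> nat \<Rightarrow> complex mat \<Rightarrow> bool" where
  "preserves_expval D N M \<longleftrightarrow> M \<in> carrier_mat N N \<and> (\<forall>v\<in>carrier_vec N. expval D (M *\<^sub>v v) = expval D v)"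

lemma preserves_expval_one: "preserves_expval D N (1\<^sub>m N)"
  unfolding preserves_expval_def by auto

lemma preserves_expval_mult:
  "preserves_expval D N A \<Longrightarrow> preserves_expval D N B \<Longrightarrow> preserves_expval D N (A * B)"
  unfolding preserves_expval_def by auto

lemma preserves_expval_evolution:
  assumes D: "D \<in> carrier_mat N N" "\<And>a b. a < N \<Longrightarrow> b < N \<Longrightarrow> D $$ (a,b) = (if a = b then d a else 0)"
    and H: "hermitian_mat N H" "level_preserving d N H"
  shows "preserves_expval D N (mat_exp ((- \<i> * complex_of_real \<beta>) \<cdot>\<^sub>m H))"
proof -
  have "level_preserving d N (mat_exp ((- \<i> * complex_of_real \<beta>) \<cdot>\<^sub>m H))"
    by (intro level_preserving_mat_exp level_preserving_smult H)
  then show ?thesis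
    unfolding preserves_expval_def
    using expval_diag_unitary_level_preserving[OF D unitary_mat_exp_hermitian[OF H(1)]]
    by (auto simp: level_preserving_def)
qed

definition constraint_eigenvalue :: "nat \<Rightarrow> (nat \<Rightarrow> real) \<Rightarrow> nat \<Rightarrow> complex" where
  "constraint_eigenvalue n c a = (\<Sum>i<n. complex_of_real (c i) * (if bit a i then -1 else 1))"

lemma eq_if_low_bits_eq:
  fixes a b :: nat
  assumes "a < 2^n" "b < 2^n" "\<forall>j<n. bit a j = bit b j"
  shows "a = b"
proof -
  have "take_bit n a = a" "take_bit n b = b" using assms by (auto simp: take_bit_nat_eq_self)
  then show ?thesis
    using assms(3) by (metis bit_eq_iff bit_take_bit_iff)
qed

lemma op_on_sigma_z_entry:
  assumes "i < n" "a < 2^n" "b < 2^n"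
  shows "op_on n i sigma_z $$ (a,b) = (if a = b then (if bit a i then -1 else 1) else 0)"
proof (cases "a = b")
  case True
  have "op_on n i sigma_z $$ (a,b)
      = (\<Prod>j<n. if j = i then sigma_z (bit a j) (bit b j) else (if bit a j = bit b j then 1 else 0))"
    using assms unfolding op_on_def by simp
  also have "\<dots> = (\<Prod>j<n. if j = i then sigma_z (bit a j) (bit a j) else 1)"
    using True by (intro prod.cong) auto
  also have "\<dots> = sigma_z (bit a i) (bit a i)"
    using assms by (simp add: prod.delta)
  finally show ?thesis using True by (simp add: sigma_z_def)
next
  case False
  then obtain j where j: "j < n" "bit a j \<noteq> bit b j" using eq_if_low_bits_eq assms by blast
  have "op_on n i sigma_z $$ (a,b)
      = (\<Prod>j<n. if j = i then sigma_z (bit a j) (bit b j) else (if bit a j = bit b j then 1 else 0))"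
    using assms unfolding op_on_def by simp
  also have "\<dots> = 0"
    by (rule prod_zero) (use j in \<open>auto simp: sigma_z_def intro!: bexI[of _ j]\<close>)
  finally show ?thesis using False by simp
qed

lemma C_hat_carrier: "C_hat n c \<in> carrier_mat (2^n) (2^n)"
  unfolding C_hat_def by simp

lemma C_hat_entry:
  assumes "a < 2^n" "b < 2^n"
  shows "C_hat n c $$ (a,b) = (if a = b then constraint_eigenvalue n c a else 0)"
  using assms unfolding C_hat_def constraint_eigenvalue_def
  by (auto simp: op_on_sigma_z_entry intro!: sum.cong)

lemma sigma_sign_change:
  assumes "sigma u r s \<noteq> 0"
  shows "(if r then -1 else 1) - (if s then -1 else 1) = (-2) * (of_int u :: complex)"
  using assms unfolding sigma_def by (auto split: if_splits)

lemma level_preserving_sigma_prod: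
  assumes u: "(\<Sum>i<n. c i * of_int (u i)) = 0"
  shows "level_preserving (constraint_eigenvalue n c) (2^n) (sigma_prod n u)"
  unfolding level_preserving_def
proof (intro conjI allI impI)
  show "sigma_prod n u \<in> carrier_mat (2^n) (2^n)" unfolding sigma_prod_def by simp
  fix a b :: nat assume "a < 2^n" "b < 2^n" "sigma_prod n u $$ (a,b) \<noteq> 0"
  then have factors: "sigma (u i) (bit a i) (bit b i) \<noteq> 0" if "i < n" for i
    using that unfolding sigma_prod_def by auto
  have "constraint_eigenvalue n c a - constraint_eigenvalue n c b
      = (\<Sum>i<n. complex_of_real (c i) * ((if bit a i then -1 else 1) - (if bit b i then -1 else 1)))"
    unfolding constraint_eigenvalue_def by (simp add: sum_subtractf[symmetric] algebra_simps)
  also have "\<dots> = (\<Sum>i<n. complex_of_real (c i) * ((-2) * of_int (u i)))"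
  proof (intro sum.cong refl)
    fix i assume "i \<in> {..<n}"
    then have "sigma (u i) (bit a i) (bit b i) \<noteq> 0" using factors by simp
    from sigma_sign_change[OF this] show "complex_of_real (c i) * ((if bit a i then -1 else 1) - (if bit b i then -1 else 1))
        = complex_of_real (c i) * ((-2) * of_int (u i))" by simp
  qed
  also have "\<dots> = (-2) * complex_of_real (\<Sum>i<n. c i * of_int (u i))"
    by (simp add: sum_distrib_left algebra_simps)
  finally show "constraint_eigenvalue n c a = constraint_eigenvalue n c b" using u by simp
qed

lemma level_preserving_H_c:
  assumes "(\<Sum>i<n. c i * of_int (u i)) = 0"
  shows "level_preserving (constraint_eigenvalue n c) (2^n) (H_c n u)"
proof -
  have "(\<Sum>i<n. c i * of_int (- u i)) = 0"
    using assms by (simp add: sum_negf)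
  then show ?thesis
    unfolding H_c_def using assms by (intro level_preserving_add level_preserving_sigma_prod)
qed

lemma hermitian_H_c: "hermitian_mat (2^n) (H_c n u)"
proof -
  have "sigma (- u) r s = sigma u s r" "cnj (sigma u r s) = sigma u r s" for u r s
    unfolding sigma_def by auto
  then show ?thesis
    unfolding hermitian_mat_def H_c_def sigma_prod_def by simp
qed

lemma level_preserving_H_d:
  assumes "\<And>u. u \<in> Delta n C \<Longrightarrow> (\<Sum>i<n. c i * of_int (u i)) = 0"
  shows "level_preserving (constraint_eigenvalue n c) (2^n) (H_d n C)"
  unfolding level_preserving_def
proof (intro conjI allI impI)
  show "H_d n C \<in> carrier_mat (2^n) (2^n)" unfolding H_d_def by simp
  fix a b :: nat assume ab: "a < 2^n" "b < 2^n" and "H_d n C $$ (a,b) \<noteq> 0"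
  then obtain u where "u \<in> Delta n C" "H_c n u $$ (a,b) \<noteq> 0"
    unfolding H_d_def by (auto intro: sum.not_neutral_contains_not_neutral)
  then show "constraint_eigenvalue n c a = constraint_eigenvalue n c b"
    using level_preserving_H_c[OF assms] ab by (auto simp: level_preserving_def)
qed

lemma hermitian_H_d: "hermitian_mat (2^n) (H_d n C)"
  using hermitian_H_c unfolding hermitian_mat_def H_d_def by simp

lemma Delta_row_orthogonal:
  "u \<in> Delta n C \<Longrightarrow> r < dim_row C \<Longrightarrow> (\<Sum>i<n. C $$ (r,i) * of_int (u i)) = 0"
  unfolding Delta_def by auto

lemma preserves_expval_B_hat:
  assumes "set us \<subseteq> Delta n C" "r < dim_row C"
  shows "preserves_expval (C_hat n (\<lambda>i. C $$ (r,i))) (2^n) (B_hat n \<beta> us)"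
  using assms(1)
proof (induction us)
  case Nil
  then show ?case unfolding B_hat_def by (simp add: preserves_expval_one)
next
  case (Cons u us)
  have "preserves_expval (C_hat n (\<lambda>i. C $$ (r,i))) (2^n) (mat_exp ((- \<i> * complex_of_real \<beta>) \<cdot>\<^sub>m H_c n u))"
    using Cons.prems Delta_row_orthogonal[OF _ assms(2)]
    by (intro preserves_expval_evolution[OF C_hat_carrier C_hat_entry hermitian_H_c level_preserving_H_c]) auto
  then show ?case
    using Cons unfolding B_hat_def by (simp add: preserves_expval_mult)
qed

theorem lemma1:
  fixes n :: nat and C :: "real mat" and r :: nat and \<beta> :: real
    and x :: "complex vec" and us :: "(nat \<Rightarrow> int) list"
  assumes "n \<ge> 1"
    and "dim_col C = n"
    and "r < dim_row C"
    and "dim_vec x = 2^n"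
    and "(\<Sum>i<2^n. (cmod (x $ i))^2) = 1"
    and "distinct us" and "set us = Delta n C"
  shows "let c = (\<lambda>i. C $$ (r,i));
             xc = mat_exp ((- \<i> * complex_of_real \<beta>) \<cdot>\<^sub>m H_d n C) *\<^sub>v x;
             xs = B_hat n \<beta> us *\<^sub>v x
         in expval (C_hat n c) xs = expval (C_hat n c) xc"
proof -
  define c where "c = (\<lambda>i. C $$ (r,i))"
  have x: "x \<in> carrier_vec (2^n)" using assms(4) by (rule carrier_vecI)
  have "preserves_expval (C_hat n c) (2^n) (B_hat n \<beta> us)"
    unfolding c_def using preserves_expval_B_hat assms(3,7) by simp
  moreover have "preserves_expval (C_hat n c) (2^n) (mat_exp ((- \<i> * complex_of_real \<beta>) \<cdot>\<^sub>m H_d n C))"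
    unfolding c_def using Delta_row_orthogonal[OF _ assms(3)]
    by (intro preserves_expval_evolution[OF C_hat_carrier C_hat_entry hermitian_H_d level_preserving_H_d])
  ultimately show ?thesis
    using x unfolding preserves_expval_def Let_def c_def[symmetric] by simp
qed

end
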